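(* Consider the location game $\mathcal L(n,[0,1])$ on the unit segment. (a) If $n\ge2$ is even, then $\operatorname{PoA}(n)=2$. If $n>3$ is odd, then $\operatorname{PoA}(n)=\dfrac{2n}{n+1}$. (b) For $n=2$, $\operatorname{PoS}(n)=2$. For every $n\ge4$, $\operatorname{PoS}(n)=\dfrac{n}{n-2}$.
   Context: Location game $\mathcal L(n,[0,1])$: $n$ players each choose a point of $[0,1]$. Consumers are distributed uniformly (Lebesgue measure $\lambda$) on $[0,1]$, and each shops at a closest occupied location (distance $|x-y|$). Consumers equidistant from several closest occupied locations are split equally among those locations, and the share of a location is split equally among the players located there. Payoff is the mass of consumers attracted. Nash equilibria are pure. Social cost: \[ C(\boldsymbol x)=\int_0^1\min_i|x_i-y|\,dy. \] With $\mathcal E_n$ the (nonempty) set of pure Nash equilibria, \[ \operatorname{PoA}(n)=\frac{\sup_{\boldsymbol x\in\mathcal E_n}C(\boldsymbol x)}{\inf_{\boldsymbol x\in[0,1]^n}C(\boldsymbol x)}, \qquad \operatorname{PoS}(n)=\frac{\inf_{\boldsymbol x\in\mathcal E_n}C(\boldsymbol x)}{\inf_{\boldsymbol x\in[0,1]^n}C(\boldsymbol x)}. \] *)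

theory Defs
  imports "HOL-Analysis.Analysis"
begin

definition profiles :: "nat \<Rightarrow> (nat \<Rightarrow> real) set" where
  "profiles n = {..<n} \<rightarrow>\<^sub>E {0..1}"

definition dmin :: "nat \<Rightarrow> (nat \<Rightarrow> real) \<Rightarrow> real \<Rightarrow> real" where
  "dmin n x y = Min ((\<lambda>i. \<bar>x i - y\<bar>) ` {..<n})"

definition closest :: "nat \<Rightarrow> (nat \<Rightarrow> real) \<Rightarrow> real \<Rightarrow> real set" where
  "closest n x y = {l \<in> x ` {..<n}. \<bar>l - y\<bar> = dmin n x y}"

definition share :: "nat \<Rightarrow> (nat \<Rightarrow> real) \<Rightarrow> nat \<Rightarrow> real \<Rightarrow> real" where
  "share n x i y = (if x i \<in> closest n x y
     then 1 / (real (card (closest n x y)) * real (card {j \<in> {..<n}. x j = x i}))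
     else 0)"

definition payoff :: "nat \<Rightarrow> (nat \<Rightarrow> real) \<Rightarrow> nat \<Rightarrow> real" where
  "payoff n x i = integral {0..1} (share n x i)"

definition is_NE :: "nat \<Rightarrow> (nat \<Rightarrow> real) \<Rightarrow> bool" where
  "is_NE n x \<longleftrightarrow> x \<in> profiles n \<and>
     (\<forall>i<n. \<forall>z\<in>{0..1}. payoff n (x(i := z)) i \<le> payoff n x i)"

definition social_cost :: "nat \<Rightarrow> (nat \<Rightarrow> real) \<Rightarrow> real" where
  "social_cost n x = integral {0..1} (dmin n x)"

definition PoA :: "nat \<Rightarrow> real" where
  "PoA n = Sup (social_cost n ` {x. is_NE n x}) / Inf (social_cost n ` profiles n)"

definition PoS :: "nat \<Rightarrow> real" where
  "PoS n = Inf (social_cost n ` {x. is_NE n x}) / Inf (social_cost n ` profiles n)"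

end

theory Submission
  imports Defs
begin

text \<open>
  A location shared by \<open>m\<close> players whose Voronoi cell in \<open>[0,1]\<close> has width \<open>w\<close> pays each of
  them \<open>w / m\<close>. In equilibrium no half-cell is longer than any payoff, since otherwise some player
  would move next to that location into the long half-cell. Consequently at most two players share
  a location, both half-cells of a shared location equal the longest half-cell \<open>H\<close>, the two
  extreme locations are shared, and \<open>n H \<le> 1\<close> because the payoffs sum to \<open>1\<close>; for odd \<open>n\<close> a
  parity count along the segment improves this to \<open>(n + 1) H \<le> 1\<close>. The social cost is the sum of
  \<open>(a\<^sup>2 + b\<^sup>2) / 2\<close> over the pairs of half-cells \<open>a, b\<close>: it is at most \<open>H / 2\<close> in equilibrium and
  at least \<open>1 / (4 k)\<close> for \<open>k\<close> distinct locations, with equality for equally spaced ones. Since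
  the extreme locations are shared, an equilibrium has at most \<open>n - 2\<close> locations, and equally
  spaced profiles with one or two players per point, single only in the interior, are equilibria
  attaining all the bounds.
\<close>

lemma sorted_list_of_set_nth_less_iff:
  assumes "finite S" "i < card S" "j < card S"
  shows "sorted_list_of_set S ! i < sorted_list_of_set S ! j \<longleftrightarrow> i < j"
  using sorted_wrt_nth_less[OF strict_sorted_list_of_set, of i j S]
    sorted_wrt_nth_less[OF strict_sorted_list_of_set, of j i S] assms
  by (cases i j rule: linorder_cases) auto

lemma sorted_list_of_set_nth_le_iff:
  assumes "finite S" "i < card S" "j < card S"
  shows "sorted_list_of_set S ! i \<le> sorted_list_of_set S ! j \<longleftrightarrow> i \<le> j"
  using sorted_list_of_set_nth_less_iff[OF assms(1,3,2)] by (simp add: not_less[symmetric])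

lemma sorted_list_of_set_nth_in: "finite S \<Longrightarrow> j < card S \<Longrightarrow> sorted_list_of_set S ! j \<in> S"
  by (metis length_sorted_list_of_set nth_mem set_sorted_list_of_set)

lemma in_sorted_list_of_set_nth:
  "finite S \<Longrightarrow> s \<in> S \<Longrightarrow> \<exists>j<card S. s = sorted_list_of_set S ! j"
  by (metis in_set_conv_nth length_sorted_list_of_set set_sorted_list_of_set)

lemma sorted_list_of_set_first_le:
  assumes "finite S" "s \<in> S"
  shows "sorted_list_of_set S ! 0 \<le> s"
proof -
  obtain i where "i < card S" "s = sorted_list_of_set S ! i"
    using in_sorted_list_of_set_nth[OF assms] by blast
  thus ?thesis using sorted_list_of_set_nth_le_iff[OF assms(1), of 0 i] by simp
qed

lemma sorted_list_of_set_last_ge: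
  assumes "finite S" "s \<in> S"
  shows "s \<le> sorted_list_of_set S ! (card S - 1)"
proof -
  obtain i where "i < card S" "s = sorted_list_of_set S ! i"
    using in_sorted_list_of_set_nth[OF assms] by blast
  thus ?thesis using sorted_list_of_set_nth_le_iff[OF assms(1), of i "card S - 1"] by simp
qed

lemma sum_sorted_list_of_set:
  assumes "finite S"
  shows "(\<Sum>l\<in>S. f l) = (\<Sum>j<card S. f (sorted_list_of_set S ! j))"
  using sum.reindex_bij_betw[OF bij_betw_nth[of "sorted_list_of_set S"], where g=f] assms by simp

lemma Min_neq_Max:
  assumes "finite S" "2 \<le> card S"
  shows "Min S \<noteq> Max S"
proof
  assume eq: "Min S = Max S"
  have "S \<subseteq> {Min S}"
  proof
    fix s assume "s \<in> S"
    hence "Min S \<le> s" "s \<le> Max S" using assms(1) by simp_all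
    thus "s \<in> {Min S}" using eq by simp
  qed
  from card_mono[OF _ this] show False using assms(2) by simp
qed

section \<open>Voronoi cells\<close>

text \<open>For a finite set \<open>S\<close> of occupied locations, the consumers closest to \<open>l \<in> S\<close> form the
  interval from \<open>cell_lo S l\<close> to \<open>cell_hi S l\<close>.\<close>

definition cell_lo :: "real set \<Rightarrow> real \<Rightarrow> real" where
  "cell_lo S l = (if \<exists>s\<in>S. s < l then (l + Max {s\<in>S. s < l}) / 2 else 0)"

definition cell_hi :: "real set \<Rightarrow> real \<Rightarrow> real" where
  "cell_hi S l = (if \<exists>s\<in>S. l < s then (l + Min {s\<in>S. l < s}) / 2 else 1)"

definition cell_width :: "real set \<Rightarrow> real \<Rightarrow> real" where
  "cell_width S l = cell_hi S l - cell_lo S l"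

definition cell_cost :: "real set \<Rightarrow> real \<Rightarrow> real" where
  "cell_cost S l = ((l - cell_lo S l)\<^sup>2 + (cell_hi S l - l)\<^sup>2) / 2"

lemma cell_lo_eq:
  assumes "finite S" "p \<in> S" "p < l" "\<And>s. s \<in> S \<Longrightarrow> s < l \<Longrightarrow> s \<le> p"
  shows "cell_lo S l = (l + p) / 2"
proof -
  have "Max {s\<in>S. s < l} = p" using assms by (intro Max_eqI) auto
  thus ?thesis using assms unfolding cell_lo_def by auto
qed

lemma cell_lo_eq_0: "(\<And>s. s \<in> S \<Longrightarrow> l \<le> s) \<Longrightarrow> cell_lo S l = 0"
  unfolding cell_lo_def by force

lemma cell_hi_eq:
  assumes "finite S" "q \<in> S" "l < q" "\<And>s. s \<in> S \<Longrightarrow> l < s \<Longrightarrow> q \<le> s"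
  shows "cell_hi S l = (l + q) / 2"
proof -
  have "Min {s\<in>S. l < s} = q" using assms by (intro Min_eqI) auto
  thus ?thesis using assms unfolding cell_hi_def by auto
qed

lemma cell_hi_eq_1: "(\<And>s. s \<in> S \<Longrightarrow> s \<le> l) \<Longrightarrow> cell_hi S l = 1"
  unfolding cell_hi_def by force

lemma cell_lo_cases:
  assumes "finite S"
  obtains (neighbour) p where "p \<in> S" "p < l" "\<forall>s\<in>S. s < l \<longrightarrow> s \<le> p" "cell_lo S l = (l + p) / 2"
    | (first) "\<forall>s\<in>S. l \<le> s" "cell_lo S l = 0"
proof (cases "\<exists>s\<in>S. s < l")
  case True
  let ?p = "Max {s\<in>S. s < l}"
  have "finite {s\<in>S. s < l}" "{s\<in>S. s < l} \<noteq> {}" using assms True by auto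
  hence "?p \<in> S" "?p < l" "\<forall>s\<in>S. s < l \<longrightarrow> s \<le> ?p" using Max_in Max_ge by auto
  with True show ?thesis using neighbour unfolding cell_lo_def by auto
next
  case False
  show ?thesis by (rule first) (use False in \<open>auto simp: cell_lo_def\<close>)
qed

lemma cell_hi_cases:
  assumes "finite S"
  obtains (neighbour) q where "q \<in> S" "l < q" "\<forall>s\<in>S. l < s \<longrightarrow> q \<le> s" "cell_hi S l = (l + q) / 2"
    | (last) "\<forall>s\<in>S. s \<le> l" "cell_hi S l = 1"
proof (cases "\<exists>s\<in>S. l < s")
  case True
  let ?q = "Min {s\<in>S. l < s}"
  have "finite {s\<in>S. l < s}" "{s\<in>S. l < s} \<noteq> {}" using assms True by auto
  hence "?q \<in> S" "l < ?q" "\<forall>s\<in>S. l < s \<longrightarrow> ?q \<le> s" using Min_in Min_le by auto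
  with True show ?thesis using neighbour unfolding cell_hi_def by auto
next
  case False
  show ?thesis by (rule last) (use False in \<open>auto simp: cell_hi_def\<close>)
qed

lemma cell_lo_ge_midpoint: "finite S \<Longrightarrow> s \<in> S \<Longrightarrow> s < l \<Longrightarrow> (l + s) / 2 \<le> cell_lo S l"
  by (cases rule: cell_lo_cases[of S l]) auto

lemma cell_hi_le_midpoint: "finite S \<Longrightarrow> s \<in> S \<Longrightarrow> l < s \<Longrightarrow> cell_hi S l \<le> (l + s) / 2"
  by (cases rule: cell_hi_cases[of S l]) auto

lemma cell_lo_bounds:
  "finite S \<Longrightarrow> S \<subseteq> {0..1} \<Longrightarrow> l \<in> {0..1} \<Longrightarrow> 0 \<le> cell_lo S l \<and> cell_lo S l \<le> l"
  by (cases rule: cell_lo_cases[of S l]) auto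

lemma cell_hi_bounds:
  "finite S \<Longrightarrow> S \<subseteq> {0..1} \<Longrightarrow> l \<in> {0..1} \<Longrightarrow> l \<le> cell_hi S l \<and> cell_hi S l \<le> 1"
  by (cases rule: cell_hi_cases[of S l]) auto

lemma cell_width_pos: "finite S \<Longrightarrow> S \<subseteq> {0..1} \<Longrightarrow> l \<in> {0..1} \<Longrightarrow> 0 < cell_width S l"
  unfolding cell_width_def
  by (cases rule: cell_lo_cases[of S l]; cases rule: cell_hi_cases[of S l]) auto

lemma closest_in_cell:
  assumes "finite S" "l \<in> S" "s \<in> S" "cell_lo S l \<le> y" "y \<le> cell_hi S l"
  shows "\<bar>l - y\<bar> \<le> \<bar>s - y\<bar>"
  using assms cell_lo_ge_midpoint[OF assms(1,3), of l] cell_hi_le_midpoint[OF assms(1,3), of l]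
  by (cases s l rule: linorder_cases) auto

lemma strictly_closest_in_cell:
  assumes "finite S" "l \<in> S" "s \<in> S" "s \<noteq> l" "cell_lo S l < y" "y < cell_hi S l"
  shows "\<bar>l - y\<bar> < \<bar>s - y\<bar>"
  using assms cell_lo_ge_midpoint[OF assms(1,3), of l] cell_hi_le_midpoint[OF assms(1,3), of l]
  by (cases s l rule: linorder_cases) auto

lemma closer_outside_cell:
  assumes "finite S" "y < cell_lo S l \<or> cell_hi S l < y" "y \<in> {0..1}"
  shows "\<exists>s\<in>S. \<bar>s - y\<bar> < \<bar>l - y\<bar>"
proof (cases "y < cell_lo S l")
  case True
  then show ?thesis
    using assms(3) by (cases rule: cell_lo_cases[OF assms(1), of l]) (auto intro!: bexI)
next
  case False
  then show ?thesis
    using assms(2,3) by (cases rule: cell_hi_cases[OF assms(1), of l]) (auto intro!: bexI)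
qed

lemma cell_lo_reflect:
  assumes "finite S"
  shows "cell_lo ((\<lambda>s. 1 - s) ` S) (1 - l) = 1 - cell_hi S l"
  using assms
proof (cases rule: cell_hi_cases[of S l])
  case (neighbour q)
  have "cell_lo ((\<lambda>s. 1 - s) ` S) (1 - l) = (1 - l + (1 - q)) / 2"
    using assms neighbour by (intro cell_lo_eq) auto
  thus ?thesis using neighbour by simp
next
  case last
  thus ?thesis by (auto intro: cell_lo_eq_0)
qed

lemma cell_hi_reflect:
  assumes "finite S"
  shows "cell_hi ((\<lambda>s. 1 - s) ` S) (1 - l) = 1 - cell_lo S l"
  using cell_lo_reflect[of "(\<lambda>s. 1 - s) ` S" "1 - l"] assms by (simp add: image_image)

lemma cell_width_reflect:
  "finite S \<Longrightarrow> cell_width ((\<lambda>s. 1 - s) ` S) (1 - l) = cell_width S l"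
  unfolding cell_width_def by (simp add: cell_lo_reflect cell_hi_reflect)

lemma cell_between_sorted_neighbours:
  assumes "finite S" "Suc j < card S"
  defines "xs \<equiv> sorted_list_of_set S"
  shows "cell_hi S (xs ! j) = (xs ! j + xs ! Suc j) / 2"
    and "cell_lo S (xs ! Suc j) = (xs ! j + xs ! Suc j) / 2"
proof -
  have lt: "xs ! j < xs ! Suc j"
    using sorted_list_of_set_nth_less_iff[OF assms(1)] assms(2) unfolding xs_def by simp
  have between: "s \<le> xs ! j \<or> xs ! Suc j \<le> s" if s: "s \<in> S" for s
  proof -
    obtain i where "i < card S" "s = xs ! i"
      using in_sorted_list_of_set_nth[OF assms(1) s] unfolding xs_def by blast
    thus ?thesis using sorted_list_of_set_nth_le_iff[OF assms(1)] assms(2) unfolding xs_def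
      by (cases "i \<le> j") auto
  qed
  have mem: "xs ! j \<in> S" "xs ! Suc j \<in> S"
    using sorted_list_of_set_nth_in[OF assms(1)] assms(2) unfolding xs_def by auto
  show "cell_hi S (xs ! j) = (xs ! j + xs ! Suc j) / 2"
    using between by (intro cell_hi_eq[OF assms(1) mem(2) lt]) force
  have "cell_lo S (xs ! Suc j) = (xs ! Suc j + xs ! j) / 2"
    using between by (intro cell_lo_eq[OF assms(1) mem(1) lt]) force
  thus "cell_lo S (xs ! Suc j) = (xs ! j + xs ! Suc j) / 2" by simp
qed

lemma cells_tile_unit_interval:
  assumes "finite S" "S \<noteq> {}"
  defines "xs \<equiv> sorted_list_of_set S"
    and "b \<equiv> \<lambda>j. if j < card S then cell_lo S (sorted_list_of_set S ! j) else 1"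
  shows "b 0 = 0" and "b (card S) = 1"
    and "\<And>j. j < card S \<Longrightarrow> cell_lo S (xs ! j) = b j \<and> cell_hi S (xs ! j) = b (Suc j)"
proof -
  have k: "0 < card S" using assms(1,2) by (simp add: card_gt_0_iff)
  note le_first = sorted_list_of_set_first_le[OF assms(1)]
    and le_last = sorted_list_of_set_last_ge[OF assms(1)]
  show "b 0 = 0" using k le_first unfolding b_def xs_def by (auto intro: cell_lo_eq_0)
  show "b (card S) = 1" unfolding b_def by simp
  fix j assume j: "j < card S"
  show "cell_lo S (xs ! j) = b j \<and> cell_hi S (xs ! j) = b (Suc j)"
  proof (cases "Suc j < card S")
    case True
    thus ?thesis using cell_between_sorted_neighbours[OF assms(1) True] j
      unfolding b_def xs_def by simp
  next
    case False
    hence "j = card S - 1" using j by simp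
    thus ?thesis using le_last j unfolding b_def xs_def by (auto intro: cell_hi_eq_1)
  qed
qed

lemma sum_cell_width:
  assumes "finite S" "S \<noteq> {}"
  shows "(\<Sum>l\<in>S. cell_width S l) = 1"
proof -
  define xs where "xs = sorted_list_of_set S"
  define b where "b j = (if j < card S then cell_lo S (xs ! j) else 1)" for j
  note tile = cells_tile_unit_interval[OF assms, folded xs_def, folded b_def]
  have "(\<Sum>l\<in>S. cell_width S l) = (\<Sum>j<card S. b (Suc j) - b j)"
    unfolding sum_sorted_list_of_set[OF assms(1)] xs_def[symmetric]
    by (rule sum.cong) (use tile(3) in \<open>auto simp: cell_width_def\<close>)
  also have "\<dots> = 1" using tile(1,2) by (simp add: sum_lessThan_telescope)
  finally show ?thesis .
qed

section \<open>Payoffs and social cost\<close>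

abbreviation locations :: "nat \<Rightarrow> (nat \<Rightarrow> real) \<Rightarrow> real set" where
  "locations n x \<equiv> x ` {..<n}"

definition occupancy :: "nat \<Rightarrow> (nat \<Rightarrow> real) \<Rightarrow> real \<Rightarrow> nat" where
  "occupancy n x l = card {j \<in> {..<n}. x j = l}"

lemma occupancy_pos: "l \<in> locations n x \<Longrightarrow> 0 < occupancy n x l"
  unfolding occupancy_def by (auto simp: card_gt_0_iff)

lemma sum_occupancy: "(\<Sum>l\<in>locations n x. occupancy n x l) = n"
  using sum.image_gen[of "{..<n}" "\<lambda>_. 1::nat" x] unfolding occupancy_def by simp

lemma sum_players_by_location:
  "(\<Sum>i<n. g (x i) / real (occupancy n x (x i))) = (\<Sum>l\<in>locations n x. g l)"
proof -
  have "(\<Sum>i<n. g (x i) / real (occupancy n x (x i)))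
      = (\<Sum>l\<in>locations n x. \<Sum>i\<in>{i \<in> {..<n}. x i = l}. g l / real (occupancy n x l))"
    by (subst sum.image_gen[of "{..<n}" _ x]) (auto intro!: sum.cong)
  also have "\<dots> = (\<Sum>l\<in>locations n x. g l)"
    using occupancy_pos by (intro sum.cong) (auto simp: occupancy_def)
  finally show ?thesis .
qed

lemma dmin_le: "i < n \<Longrightarrow> dmin n x y \<le> \<bar>x i - y\<bar>"
  unfolding dmin_def by (intro Min_le) auto

lemma dmin_eqI:
  "l \<in> locations n x \<Longrightarrow> (\<And>s. s \<in> locations n x \<Longrightarrow> \<bar>l - y\<bar> \<le> \<bar>s - y\<bar>) \<Longrightarrow> dmin n x y = \<bar>l - y\<bar>"
  unfolding dmin_def by (intro Min_eqI) auto

lemma share_in_cell: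
  assumes "i < n" "cell_lo (locations n x) (x i) < y" "y < cell_hi (locations n x) (x i)"
  shows "share n x i y = 1 / real (occupancy n x (x i))"
proof -
  have fin: "finite (locations n x)" and xi: "x i \<in> locations n x" using assms(1) by auto
  have d: "dmin n x y = \<bar>x i - y\<bar>"
    using closest_in_cell[OF fin xi] assms by (intro dmin_eqI[OF xi]) auto
  have "closest n x y = {x i}"
    using strictly_closest_in_cell[OF fin xi] assms xi unfolding closest_def d by force
  thus ?thesis unfolding share_def occupancy_def by simp
qed

lemma share_outside_cell:
  assumes "i < n" "y \<in> {0..1}" "y < cell_lo (locations n x) (x i) \<or> cell_hi (locations n x) (x i) < y"
  shows "share n x i y = 0"
proof -
  obtain j where "j < n" "\<bar>x j - y\<bar> < \<bar>x i - y\<bar>"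
    using closer_outside_cell[of "locations n x" y "x i"] assms by auto
  hence "dmin n x y < \<bar>x i - y\<bar>" using dmin_le[of j n x y] by linarith
  thus ?thesis unfolding share_def closest_def by auto
qed

lemma has_integral_share:
  assumes vals: "locations n x \<subseteq> {0..1}" and i: "i < n"
  shows "(share n x i has_integral cell_width (locations n x) (x i) / real (occupancy n x (x i))) {0..1}"
proof -
  let ?a = "cell_lo (locations n x) (x i)" and ?b = "cell_hi (locations n x) (x i)"
  let ?c = "1 / real (occupancy n x (x i))"
  have ab: "0 \<le> ?a" "?a \<le> ?b" "?b \<le> 1"
    using cell_lo_bounds[of "locations n x" "x i"] cell_hi_bounds[of "locations n x" "x i"] vals i
    by auto
  have "((\<lambda>y. ?c) has_integral (?b - ?a) * ?c) (cbox ?a ?b)"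
    using has_integral_const_real[of ?c ?a ?b] ab by (simp add: content_real)
  hence "((\<lambda>y. if y \<in> cbox ?a ?b then ?c else 0) has_integral (?b - ?a) * ?c) (cbox 0 1)"
    using ab by (intro has_integral_restrict_closed_subinterval) auto
  hence step: "((\<lambda>y. if ?a \<le> y \<and> y \<le> ?b then ?c else 0)
      has_integral (?b - ?a) / real (occupancy n x (x i))) {0..1}"
    by simp
  show ?thesis unfolding cell_width_def
  proof (rule has_integral_spike_finite[of "{?a, ?b}", OF _ _ step])
    fix y assume "y \<in> {0..1} - {?a, ?b}"
    thus "share n x i y = (if ?a \<le> y \<and> y \<le> ?b then ?c else 0)"
      using share_in_cell[OF i, where y=y] share_outside_cell[OF i, where y=y] by auto
  qed auto
qed

lemma payoff_eq_cell_width: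
  "locations n x \<subseteq> {0..1} \<Longrightarrow> i < n \<Longrightarrow>
    payoff n x i = cell_width (locations n x) (x i) / real (occupancy n x (x i))"
  unfolding payoff_def by (rule integral_unique[OF has_integral_share])

lemma payoff_nonneg: "locations n x \<subseteq> {0..1} \<Longrightarrow> i < n \<Longrightarrow> 0 \<le> payoff n x i"
  using payoff_eq_cell_width[of x n i] cell_width_pos[of "locations n x" "x i"] by auto

lemma payoff_alone:
  "locations n x \<subseteq> {0..1} \<Longrightarrow> i < n \<Longrightarrow> occupancy n x (x i) = 1 \<Longrightarrow>
    payoff n x i = cell_width (locations n x) (x i)"
  using payoff_eq_cell_width[of x n i] by simp

lemma sum_payoff:
  assumes "locations n x \<subseteq> {0..1}" "0 < n"
  shows "(\<Sum>i<n. payoff n x i) = 1"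
  using payoff_eq_cell_width[OF assms(1)] sum_players_by_location[of "cell_width (locations n x)" x n]
    sum_cell_width[of "locations n x"] assms(2)
  by (simp add: lessThan_empty_iff)

lemma has_integral_abs_diff:
  fixes a b l :: real
  assumes "a \<le> l" "l \<le> b"
  shows "((\<lambda>y. \<bar>l - y\<bar>) has_integral ((l - a)\<^sup>2 + (b - l)\<^sup>2) / 2) {a..b}"
proof -
  have "((\<lambda>y. l - y) has_integral (l * l - l\<^sup>2 / 2) - (l * a - a\<^sup>2 / 2)) {a..l}"
    using assms(1)
    by (intro fundamental_theorem_of_calculus)
       (auto intro!: derivative_eq_intros simp flip: has_real_derivative_iff_has_vector_derivative)
  also have "(l * l - l\<^sup>2 / 2) - (l * a - a\<^sup>2 / 2) = (l - a)\<^sup>2 / 2"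
    by (simp add: power2_eq_square algebra_simps)
  finally have left: "((\<lambda>y. \<bar>l - y\<bar>) has_integral (l - a)\<^sup>2 / 2) {a..l}"
    by (rule has_integral_eq[rotated]) simp
  have "((\<lambda>y. y - l) has_integral (b\<^sup>2 / 2 - l * b) - (l\<^sup>2 / 2 - l * l)) {l..b}"
    using assms(2)
    by (intro fundamental_theorem_of_calculus)
       (auto intro!: derivative_eq_intros simp flip: has_real_derivative_iff_has_vector_derivative)
  also have "(b\<^sup>2 / 2 - l * b) - (l\<^sup>2 / 2 - l * l) = (b - l)\<^sup>2 / 2"
    by (simp add: power2_eq_square algebra_simps)
  finally have right: "((\<lambda>y. \<bar>l - y\<bar>) has_integral (b - l)\<^sup>2 / 2) {l..b}"
    by (rule has_integral_eq[rotated]) simp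
  show ?thesis using has_integral_combine[OF assms left right] by (simp add: add_divide_distrib)
qed

lemma has_integral_dmin_cell:
  assumes vals: "locations n x \<subseteq> {0..1}" and l: "l \<in> locations n x"
  shows "(dmin n x has_integral cell_cost (locations n x) l)
           {cell_lo (locations n x) l..cell_hi (locations n x) l}"
  unfolding cell_cost_def
proof (rule has_integral_eq[OF _ has_integral_abs_diff])
  fix y assume "y \<in> {cell_lo (locations n x) l..cell_hi (locations n x) l}"
  thus "\<bar>l - y\<bar> = dmin n x y"
    using closest_in_cell[of "locations n x" l] l by (intro dmin_eqI[symmetric]) auto
next
  have "finite (locations n x)" "l \<in> {0..1}" using vals l by auto
  thus "cell_lo (locations n x) l \<le> l" "l \<le> cell_hi (locations n x) l"
    using cell_lo_bounds[of "locations n x" l] cell_hi_bounds[of "locations n x" l] vals by auto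
qed

lemma social_cost_eq_sum_cell_cost:
  assumes vals: "locations n x \<subseteq> {0..1}" and n: "0 < n"
  shows "social_cost n x = (\<Sum>l\<in>locations n x. cell_cost (locations n x) l)"
proof -
  define S where "S = locations n x"
  define xs where "xs = sorted_list_of_set S"
  define b where "b j = (if j < card S then cell_lo S (xs ! j) else 1)" for j
  have fin: "finite S" and ne: "S \<noteq> {}" using n unfolding S_def by auto
  note tile = cells_tile_unit_interval[OF fin ne, folded xs_def, folded b_def]
  have "(dmin n x has_integral (\<Sum>i<j. cell_cost S (xs ! i))) {0..b j}" if "j \<le> card S" for j
    using that
  proof (induction j)
    case 0
    show ?case using tile(1) by (simp add: has_integral_refl)
  next
    case (Suc j)
    have xj: "xs ! j \<in> S" using sorted_list_of_set_nth_in[OF fin] Suc.prems unfolding xs_def by simp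
    have "(dmin n x has_integral cell_cost S (xs ! j)) {b j..b (Suc j)}"
      using has_integral_dmin_cell[OF vals, of "xs ! j"] xj tile(3)[of j] Suc.prems
      unfolding S_def by simp
    moreover have "0 \<le> b j" "b j \<le> b (Suc j)"
      using cell_lo_bounds[OF fin, of "xs ! j"] cell_width_pos[OF fin, of "xs ! j"] tile(3)[of j]
        xj vals Suc.prems unfolding S_def cell_width_def by auto
    moreover note Suc.IH[OF Suc_leD[OF Suc.prems]]
    ultimately show ?case using has_integral_combine[of 0 "b j" "b (Suc j)"] by simp
  qed
  from this[of "card S"] tile(2)
  have "(dmin n x has_integral (\<Sum>l\<in>S. cell_cost S l)) {0..1}"
    unfolding sum_sorted_list_of_set[OF fin] xs_def by simp
  thus ?thesis unfolding social_cost_def S_def by (rule integral_unique)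
qed

text \<open>With \<open>c = 1 / (2 k)\<close>, a cell with half-cells \<open>a, b\<close> costs
  \<open>(a\<^sup>2 + b\<^sup>2) / 2 \<ge> c (a + b) - c\<^sup>2\<close>, with equality when \<open>a = b = c\<close>.\<close>

lemma social_cost_ge:
  assumes vals: "locations n x \<subseteq> {0..1}" and n: "0 < n"
  shows "1 / (4 * real (card (locations n x))) \<le> social_cost n x"
proof -
  define S where "S = locations n x"
  define c where "c = 1 / (2 * real (card S))"
  have fin: "finite S" and ne: "S \<noteq> {}" using n unfolding S_def by auto
  have tangent: "c * cell_width S l - c\<^sup>2 \<le> cell_cost S l" for l
  proof -
    have "0 \<le> (l - cell_lo S l - c)\<^sup>2 + (cell_hi S l - l - c)\<^sup>2" by simp
    thus ?thesis unfolding cell_cost_def cell_width_def by (simp add: power2_eq_square algebra_simps)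
  qed
  have "1 / (4 * real (card S)) = c * (\<Sum>l\<in>S. cell_width S l) - real (card S) * c\<^sup>2"
    using sum_cell_width[OF fin ne] fin ne unfolding c_def by (simp add: power2_eq_square)
  also have "\<dots> = (\<Sum>l\<in>S. c * cell_width S l - c\<^sup>2)"
    by (simp add: sum_subtractf sum_distrib_left)
  also have "\<dots> \<le> (\<Sum>l\<in>S. cell_cost S l)" using tangent by (rule sum_mono)
  finally show ?thesis using social_cost_eq_sum_cell_cost[OF vals n] unfolding S_def by simp
qed

section \<open>Unilateral deviations\<close>

abbreviation rivals :: "nat \<Rightarrow> (nat \<Rightarrow> real) \<Rightarrow> nat \<Rightarrow> real set" where
  "rivals n x i \<equiv> x ` ({..<n} - {i})"

lemma occupancy_eq_1_iff:
  assumes "i < n"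
  shows "occupancy n x (x i) = 1 \<longleftrightarrow> (\<forall>j<n. x j = x i \<longrightarrow> j = i)"
proof -
  let ?A = "{j \<in> {..<n}. x j = x i}"
  have iA: "i \<in> ?A" using assms by simp
  have "card ?A = 1 \<longleftrightarrow> ?A = {i}"
  proof
    assume "card ?A = 1"
    then obtain a where "?A = {a}" by (rule card_1_singletonE)
    with iA show "?A = {i}" by (metis singletonD)
  qed simp
  also have "\<dots> \<longleftrightarrow> (\<forall>j<n. x j = x i \<longrightarrow> j = i)" using iA by auto
  finally show ?thesis unfolding occupancy_def .
qed

lemma locations_fun_upd: "i < n \<Longrightarrow> locations n (x(i := z)) = insert z (rivals n x i)"
  by (simp only: fun_upd_image lessThan_iff if_True)

lemma rivals_eq:
  assumes i: "i < n"
  shows "rivals n x i = (if occupancy n x (x i) = 1 then locations n x - {x i} else locations n x)"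
proof (cases "occupancy n x (x i) = 1")
  case True
  hence uniq: "\<And>j. j < n \<Longrightarrow> x j = x i \<Longrightarrow> j = i" using occupancy_eq_1_iff[OF i] by simp
  have "rivals n x i = locations n x - {x i}"
  proof (intro equalityI subsetI)
    fix l assume "l \<in> rivals n x i"
    then obtain j where j: "j < n" "j \<noteq> i" "l = x j" by blast
    hence "x j \<noteq> x i" using uniq by metis
    thus "l \<in> locations n x - {x i}" using j by simp
  next
    fix l assume "l \<in> locations n x - {x i}"
    then obtain j where j: "j < n" "l = x j" "l \<noteq> x i" by blast
    hence "j \<in> {..<n} - {i}" by auto
    thus "l \<in> rivals n x i" using j(2) by simp
  qed
  thus ?thesis using True by simp
next
  case False
  then obtain j where j: "j < n" "j \<noteq> i" "x j = x i" using occupancy_eq_1_iff[OF i] by blast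
  have "x k \<in> rivals n x i" if "k < n" for k
  proof (cases "k = i")
    case True
    have "x j \<in> rivals n x i" using j(1,2) by simp
    thus ?thesis using True j(3) by simp
  qed (use that in simp)
  hence "rivals n x i = locations n x" by blast
  thus ?thesis using False by simp
qed

lemma in_rivals_unless_alone:
  "i < n \<Longrightarrow> s \<in> locations n x \<Longrightarrow> \<not> (s = x i \<and> occupancy n x (x i) = 1) \<Longrightarrow> s \<in> rivals n x i"
  using rivals_eq[of i n x] by (auto split: if_splits)

lemma occupancy_fun_upd_fresh:
  assumes "i < n" "z \<notin> rivals n x i"
  shows "occupancy n (x(i := z)) z = 1"
proof -
  have "j = i" if "j < n" "(x(i := z)) j = (x(i := z)) i" for j
  proof (rule ccontr)
    assume "j \<noteq> i"
    have "x j \<in> rivals n x i" using \<open>j \<noteq> i\<close> that(1) by simp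
    moreover have "x j = z" using \<open>j \<noteq> i\<close> that(2) by simp
    ultimately show False using assms(2) by simp
  qed
  hence "occupancy n (x(i := z)) ((x(i := z)) i) = 1" using occupancy_eq_1_iff[OF assms(1)] by blast
  thus ?thesis by (simp only: fun_upd_same)
qed

lemma occupancy_fun_upd_occupied:
  assumes "i < n" "z \<in> rivals n x i"
  shows "2 \<le> occupancy n (x(i := z)) z"
proof -
  obtain j where j: "j < n" "j \<noteq> i" "x j = z" using assms(2) by blast
  have "{i, j} \<subseteq> {k \<in> {..<n}. (x(i := z)) k = z}" using assms(1) j by auto
  hence "card {i, j} \<le> occupancy n (x(i := z)) z" unfolding occupancy_def by (rule card_mono[rotated]) simp
  thus ?thesis using j(2) by simp
qed

lemma payoff_deviate_fresh:
  assumes vals: "locations n x \<subseteq> {0..1}" and i: "i < n" and z: "z \<in> {0..1}" "z \<notin> rivals n x i"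
  shows "payoff n (x(i := z)) i = cell_width (insert z (rivals n x i)) z"
proof -
  have upd: "locations n (x(i := z)) = insert z (rivals n x i)" by (rule locations_fun_upd[OF i])
  have "locations n (x(i := z)) \<subseteq> {0..1}" unfolding upd using vals z(1) by blast
  from payoff_eq_cell_width[OF this i] show ?thesis
    using upd occupancy_fun_upd_fresh[OF i z(2)] by simp
qed

lemma payoff_deviate_occupied:
  assumes vals: "locations n x \<subseteq> {0..1}" and i: "i < n" and z: "z \<in> {0..1}" "z \<in> rivals n x i"
  shows "payoff n (x(i := z)) i \<le> cell_width (rivals n x i) z / 2"
proof -
  have upd: "locations n (x(i := z)) = rivals n x i"
    unfolding locations_fun_upd[OF i] using z(2) by blast
  have sub: "rivals n x i \<subseteq> {0..1}" using vals by blast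
  have "0 \<le> cell_width (rivals n x i) z"
    using cell_width_pos[OF _ sub z(1)] by (simp add: less_imp_le)
  moreover have "payoff n (x(i := z)) i = cell_width (rivals n x i) z / occupancy n (x(i := z)) z"
    using payoff_eq_cell_width[OF sub[folded upd] i] upd by simp
  ultimately show ?thesis
    using occupancy_fun_upd_occupied[OF i z(2)]
      divide_left_mono[of 2 "real (occupancy n (x(i := z)) z)" "cell_width (rivals n x i) z"]
    by simp
qed

lemma cell_width_insert_between:
  assumes "finite Q" "p \<in> Q" "q \<in> Q" "p < z" "z < q" "\<forall>s\<in>Q. s \<le> p \<or> q \<le> s"
  shows "cell_width (insert z Q) z = (q - p) / 2"
proof -
  have "cell_lo (insert z Q) z = (z + p) / 2" using assms by (intro cell_lo_eq) force+
  moreover have "cell_hi (insert z Q) z = (z + q) / 2" using assms by (intro cell_hi_eq) force+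
  ultimately show ?thesis unfolding cell_width_def by simp
qed

lemma cell_width_insert_below:
  assumes "finite Q" "q \<in> Q" "z < q" "\<forall>s\<in>Q. q \<le> s"
  shows "cell_width (insert z Q) z = (z + q) / 2"
proof -
  have "cell_lo (insert z Q) z = 0" using assms by (intro cell_lo_eq_0) force
  moreover have "cell_hi (insert z Q) z = (z + q) / 2" using assms by (intro cell_hi_eq) force+
  ultimately show ?thesis unfolding cell_width_def by simp
qed

lemma payoff_deviate_between:
  assumes vals: "locations n x \<subseteq> {0..1}" and i: "i < n"
    and pq: "p \<in> rivals n x i" "q \<in> rivals n x i" "p < q"
    and gap: "\<forall>s\<in>rivals n x i. s \<le> p \<or> q \<le> s"
  shows "payoff n (x(i := (p + q) / 2)) i = (q - p) / 2"
proof -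
  have fresh: "(p + q) / 2 \<notin> rivals n x i"
  proof
    assume "(p + q) / 2 \<in> rivals n x i"
    with gap have "(p + q) / 2 \<le> p \<or> q \<le> (p + q) / 2" by blast
    with pq(3) show False by (auto simp: field_simps)
  qed
  have "p \<in> {0..1}" "q \<in> {0..1}" using pq(1,2) vals by auto
  hence "(p + q) / 2 \<in> {0..1}" by auto
  from payoff_deviate_fresh[OF vals i this fresh] show ?thesis
    using pq gap by (simp add: cell_width_insert_between)
qed

lemma payoff_deviate_below:
  assumes vals: "locations n x \<subseteq> {0..1}" and i: "i < n" and z: "z \<in> {0..1}"
    and q: "q \<in> rivals n x i" "z < q" and above: "\<forall>s\<in>rivals n x i. q \<le> s"
  shows "payoff n (x(i := z)) i = (z + q) / 2"
proof -
  have fresh: "z \<notin> rivals n x i"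
  proof
    assume "z \<in> rivals n x i"
    with above have "q \<le> z" by blast
    with q(2) show False by simp
  qed
  from payoff_deviate_fresh[OF vals i z fresh] show ?thesis
    using q above by (simp add: cell_width_insert_below)
qed

definition covers :: "real set \<Rightarrow> real \<Rightarrow> bool" where
  "covers Q B \<longleftrightarrow> (\<forall>y\<in>{0..1}. \<exists>q\<in>Q. \<bar>q - y\<bar> \<le> B)"

lemma coversD: "covers Q B \<Longrightarrow> y \<in> {0..1} \<Longrightarrow> \<exists>q\<in>Q. \<bar>q - y\<bar> \<le> B"
  unfolding covers_def by blast

lemma covers_reflect: "covers ((\<lambda>s. 1 - s) ` Q) B \<longleftrightarrow> covers Q B"
proof -
  have reflect: "(\<forall>y\<in>{0..1}. P (1 - y)) \<longleftrightarrow> (\<forall>y\<in>{0..1::real}. P y)" for P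
  proof (intro iffI ballI)
    fix y :: real assume all: "\<forall>y\<in>{0..1}. P (1 - y)" and "y \<in> {0..1}"
    hence "P (1 - (1 - y))" by (intro bspec[OF all]) simp
    thus "P y" by simp
  qed simp
  have "(\<exists>q\<in>Q. \<bar>1 - q - y\<bar> \<le> B) \<longleftrightarrow> (\<exists>q\<in>Q. \<bar>q - (1 - y)\<bar> \<le> B)" for y
    by (simp add: abs_minus_commute algebra_simps)
  thus ?thesis using reflect[of "\<lambda>y. \<exists>q\<in>Q. \<bar>q - y\<bar> \<le> B"] unfolding covers_def by simp
qed

lemma left_half_cell_le_if_covers:
  assumes "finite Q" "Q \<subseteq> {0..1}" "covers Q B" "z \<in> Q"
  shows "z - cell_lo Q z \<le> B"
  using assms(1)
proof (cases rule: cell_lo_cases[of Q z])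
  case (neighbour p)
  have "z \<in> {0..1}" "p \<in> {0..1}" using assms(2,4) neighbour(1) by auto
  hence "(z + p) / 2 \<in> {0..1}" by auto
  then obtain r where r: "r \<in> Q" "\<bar>r - (z + p) / 2\<bar> \<le> B" using coversD[OF assms(3)] by blast
  have "r \<le> p \<or> z \<le> r" using neighbour(3) r(1) by force
  thus ?thesis using r(2) neighbour(2,4) by (elim disjE) (auto simp: abs_if field_simps)
next
  case first
  obtain r where "r \<in> Q" "\<bar>r - 0\<bar> \<le> B" using coversD[OF assms(3), of 0] by auto
  thus ?thesis using first assms(2,4) by fastforce
qed

lemma half_cells_le_if_covers:
  assumes "finite Q" "Q \<subseteq> {0..1}" "covers Q B" "z \<in> Q"
  shows "z - cell_lo Q z \<le> B" and "cell_hi Q z - z \<le> B"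
proof -
  show "z - cell_lo Q z \<le> B" by (rule left_half_cell_le_if_covers[OF assms])
  have "1 - z - cell_lo ((\<lambda>s. 1 - s) ` Q) (1 - z) \<le> B"
    using assms by (intro left_half_cell_le_if_covers) (auto simp: covers_reflect)
  thus "cell_hi Q z - z \<le> B" using cell_lo_reflect[OF assms(1)] by simp
qed

lemma cell_width_insert_le_if_covers:
  assumes fin: "finite Q" and sub: "Q \<subseteq> {0..1}" and cov: "covers Q B"
    and z: "z \<in> {0..1}" "z \<notin> Q"
  shows "cell_width (insert z Q) z \<le> B"
proof -
  have below: "r \<le> p" if "r \<in> Q" "\<forall>s\<in>insert z Q. s < z \<longrightarrow> s \<le> p" "r < z" for r p
    using that by auto
  have above: "q \<le> r" if "r \<in> Q" "\<forall>s\<in>insert z Q. z < s \<longrightarrow> q \<le> s" "z < r" for r q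
    using that by auto
  have ne: "r \<noteq> z" if "r \<in> Q" for r using that z(2) by auto
  from fin have finT: "finite (insert z Q)" by simp
  thus ?thesis
  proof (cases rule: cell_lo_cases[of "insert z Q" z])
    case lo: (neighbour p)
    from finT show ?thesis
    proof (cases rule: cell_hi_cases[of "insert z Q" z])
      case hi: (neighbour q)
      have "(p + q) / 2 \<in> {0..1}" using lo hi sub z by auto
      then obtain r where r: "r \<in> Q" "\<bar>r - (p + q) / 2\<bar> \<le> B" using coversD[OF cov] by blast
      have "r \<le> p \<or> q \<le> r" using below[OF r(1) lo(3)] above[OF r(1) hi(3)] ne[OF r(1)] by linarith
      hence "(q - p) / 2 \<le> \<bar>r - (p + q) / 2\<bar>" using lo(2) hi(2)
        by (elim disjE) (auto simp: abs_if field_simps)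
      thus ?thesis using r(2) lo(4) hi(4) unfolding cell_width_def by simp
    next
      case hi: last
      obtain r where r: "r \<in> Q" "\<bar>r - 1\<bar> \<le> B" using coversD[OF cov, of 1] by auto
      have "r \<le> p" using below[OF r(1) lo(3)] hi(1) r(1) ne[OF r(1)] by force
      thus ?thesis using r(2) lo hi unfolding cell_width_def by auto
    qed
  next
    case lo: first
    from finT show ?thesis
    proof (cases rule: cell_hi_cases[of "insert z Q" z])
      case hi: (neighbour q)
      obtain r where r: "r \<in> Q" "\<bar>r - 0\<bar> \<le> B" using coversD[OF cov, of 0] by auto
      have "q \<le> r" using above[OF r(1) hi(3)] lo(1) r(1) ne[OF r(1)] by force
      thus ?thesis using r(2) lo hi z unfolding cell_width_def by auto
    next
      case hi: last
      obtain r where "r \<in> Q" using coversD[OF cov, of 0] by auto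
      thus ?thesis using lo(1) hi(1) ne by force
    qed
  qed
qed

lemma payoff_deviate_le_if_covers:
  assumes vals: "locations n x \<subseteq> {0..1}" and i: "i < n" and z: "z \<in> {0..1}"
    and cov: "covers (rivals n x i) B"
  shows "payoff n (x(i := z)) i \<le> B"
proof (cases "z \<in> rivals n x i")
  case True
  have sub: "rivals n x i \<subseteq> {0..1}" using vals by auto
  have "payoff n (x(i := z)) i \<le> cell_width (rivals n x i) z / 2"
    by (rule payoff_deviate_occupied[OF vals i z True])
  also have "\<dots> \<le> B"
    using half_cells_le_if_covers[OF _ sub cov True] unfolding cell_width_def by auto
  finally show ?thesis .
next
  case False
  thus ?thesis using payoff_deviate_fresh[OF vals i z False] vals z
    by (auto intro!: cell_width_insert_le_if_covers[OF _ _ cov])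
qed

section \<open>Structure of equilibria\<close>

lemma ne_locations: "is_NE n x \<Longrightarrow> locations n x \<subseteq> {0..1}"
  unfolding is_NE_def profiles_def by auto

lemma ne_deviation: "is_NE n x \<Longrightarrow> i < n \<Longrightarrow> z \<in> {0..1} \<Longrightarrow> payoff n (x(i := z)) i \<le> payoff n x i"
  unfolding is_NE_def by blast

lemma is_NE_if_covers:
  assumes x: "x \<in> profiles n" and cov: "\<And>i. i < n \<Longrightarrow> covers (rivals n x i) (payoff n x i)"
  shows "is_NE n x"
proof -
  have "locations n x \<subseteq> {0..1}" using x unfolding profiles_def by auto
  thus ?thesis unfolding is_NE_def using x payoff_deviate_le_if_covers[OF _ _ _ cov] by blast
qed

text \<open>Reflecting a profile at \<open>1/2\<close> preserves payoffs and equilibria, so statements about the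
  right end of a cell follow from those about the left end.\<close>

definition mirror :: "nat \<Rightarrow> (nat \<Rightarrow> real) \<Rightarrow> nat \<Rightarrow> real" where
  "mirror n x = (\<lambda>j\<in>{..<n}. 1 - x j)"

lemma locations_mirror: "locations n (mirror n x) = (\<lambda>s. 1 - s) ` locations n x"
  unfolding mirror_def by (simp add: image_image)

lemma occupancy_mirror: "occupancy n (mirror n x) (1 - l) = occupancy n x l"
  unfolding occupancy_def mirror_def by (rule arg_cong[where f = card]) auto

lemma payoff_mirror:
  assumes vals: "locations n x \<subseteq> {0..1}" and i: "i < n"
  shows "payoff n (mirror n x) i = payoff n x i"
proof -
  have "locations n (mirror n x) \<subseteq> {0..1}" using vals unfolding locations_mirror by auto
  moreover have "mirror n x i = 1 - x i" using i by (simp add: mirror_def)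
  ultimately have "payoff n (mirror n x) i
      = cell_width ((\<lambda>s. 1 - s) ` locations n x) (1 - x i) / occupancy n (mirror n x) (1 - x i)"
    using payoff_eq_cell_width[of "mirror n x" n i] i by (simp add: locations_mirror)
  also have "\<dots> = cell_width (locations n x) (x i) / occupancy n x (x i)"
    by (simp add: cell_width_reflect occupancy_mirror)
  also have "\<dots> = payoff n x i" by (rule payoff_eq_cell_width[OF vals i, symmetric])
  finally show ?thesis .
qed

lemma is_NE_mirror:
  assumes NE: "is_NE n x"
  shows "is_NE n (mirror n x)"
  unfolding is_NE_def
proof (intro conjI allI impI ballI)
  have vals: "locations n x \<subseteq> {0..1}" by (rule ne_locations[OF NE])
  thus "mirror n x \<in> profiles n" unfolding profiles_def mirror_def by auto
  fix i z assume i: "i < n" and z: "(z::real) \<in> {0..1}"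
  have upd: "(mirror n x)(i := z) = mirror n (x(i := 1 - z))"
    using i unfolding mirror_def by (auto simp: restrict_def)
  have vals': "locations n (x(i := 1 - z)) \<subseteq> {0..1}"
    unfolding locations_fun_upd[OF i] using vals z by auto
  have "payoff n ((mirror n x)(i := z)) i = payoff n (x(i := 1 - z)) i"
    unfolding upd by (rule payoff_mirror[OF vals' i])
  also have "\<dots> \<le> payoff n x i" using ne_deviation[OF NE i] z by simp
  also have "\<dots> = payoff n (mirror n x) i" by (rule payoff_mirror[OF vals i, symmetric])
  finally show "payoff n ((mirror n x)(i := z)) i \<le> payoff n (mirror n x) i" .
qed

lemma ne_half_gap_le_payoff:
  assumes NE: "is_NE n x" and i: "i < n" and l: "l \<in> locations n x" and p: "p \<in> locations n x"
    and gap: "p < l" "\<forall>s\<in>locations n x. s \<le> p \<or> l \<le> s"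
  shows "(l - p) / 2 \<le> payoff n x i"
proof -
  let ?S = "locations n x"
  have vals: "?S \<subseteq> {0..1}" by (rule ne_locations[OF NE])
  have lo: "cell_lo ?S l = (l + p) / 2" using gap p by (intro cell_lo_eq) force+
  have hi: "cell_hi ?S p = (p + l) / 2" using gap l by (intro cell_hi_eq) force+
  consider "l = x i" "occupancy n x (x i) = 1" | "p = x i" "occupancy n x (x i) = 1"
    | "l \<in> rivals n x i" "p \<in> rivals n x i" using in_rivals_unless_alone[OF i] l p by blast
  thus ?thesis
  proof cases
    case 1
    thus ?thesis using payoff_alone[OF vals i] lo cell_hi_bounds[of ?S l] vals l
      unfolding cell_width_def by force
  next
    case 2
    thus ?thesis using payoff_alone[OF vals i] hi cell_lo_bounds[of ?S p] vals p
      unfolding cell_width_def by force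
  next
    case 3
    have "p \<in> {0..1}" "l \<in> {0..1}" using vals l p by auto
    hence z: "(p + l) / 2 \<in> {0..1}" by auto
    have "\<forall>s\<in>rivals n x i. s \<le> p \<or> l \<le> s" using gap by auto
    with 3 have "payoff n (x(i := (p + l) / 2)) i = (l - p) / 2"
      using gap(1) by (intro payoff_deviate_between[OF vals i]) simp_all
    thus ?thesis using ne_deviation[OF NE i z] by simp
  qed
qed

lemma ne_leftmost_location_le_payoff:
  assumes NE: "is_NE n x" and i: "i < n" and l: "l \<in> locations n x"
    and leftmost: "\<forall>s\<in>locations n x. l \<le> s"
  shows "l \<le> payoff n x i"
proof (cases "l = x i \<and> occupancy n x (x i) = 1")
  case True
  thus ?thesis using payoff_alone[OF ne_locations[OF NE] i] leftmost
      cell_hi_bounds[of "locations n x" l] ne_locations[OF NE] l cell_lo_eq_0[of "locations n x" l]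
    unfolding cell_width_def by force
next
  case False
  have vals: "locations n x \<subseteq> {0..1}" by (rule ne_locations[OF NE])
  show ?thesis
  proof (rule ccontr)
    assume "\<not> l \<le> payoff n x i"
    moreover have "0 \<le> payoff n x i" by (rule payoff_nonneg[OF vals i])
    ultimately have z: "payoff n x i \<in> {0..1}" "payoff n x i < l" using vals l by force+
    have "payoff n (x(i := payoff n x i)) i = (payoff n x i + l) / 2"
      using in_rivals_unless_alone[OF i l False] leftmost
      by (intro payoff_deviate_below[OF vals i z(1) _ z(2)]) auto
    thus False using ne_deviation[OF NE i z(1)] z(2) by simp
  qed
qed

lemma ne_left_half_cell_le_payoff:
  assumes NE: "is_NE n x" and i: "i < n" and l: "l \<in> locations n x"
  shows "l - cell_lo (locations n x) l \<le> payoff n x i"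
  using finite_imageI[OF finite_lessThan]
proof (cases rule: cell_lo_cases[of "locations n x" l])
  case (neighbour p)
  have "\<forall>s\<in>locations n x. s \<le> p \<or> l \<le> s" using neighbour(3) by force
  thus ?thesis using ne_half_gap_le_payoff[OF NE i l neighbour(1,2)] neighbour(4) by simp
next
  case first
  thus ?thesis using ne_leftmost_location_le_payoff[OF NE i l] by simp
qed

lemma ne_right_half_cell_le_payoff:
  assumes NE: "is_NE n x" and i: "i < n" and l: "l \<in> locations n x"
  shows "cell_hi (locations n x) l - l \<le> payoff n x i"
proof -
  have "1 - l - cell_lo (locations n (mirror n x)) (1 - l) \<le> payoff n (mirror n x) i"
    using l by (intro ne_left_half_cell_le_payoff[OF is_NE_mirror[OF NE] i]) (simp add: locations_mirror)
  thus ?thesis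
    by (simp add: locations_mirror cell_lo_reflect payoff_mirror[OF ne_locations[OF NE] i])
qed

definition max_half_cell :: "real set \<Rightarrow> real" where
  "max_half_cell S = Max ((\<lambda>l. max (l - cell_lo S l) (cell_hi S l - l)) ` S)"

lemma half_cells_le_max_half_cell:
  assumes "finite S" "l \<in> S"
  shows "l - cell_lo S l \<le> max_half_cell S" and "cell_hi S l - l \<le> max_half_cell S"
proof -
  have "max (l - cell_lo S l) (cell_hi S l - l) \<le> max_half_cell S"
    unfolding max_half_cell_def using assms by (intro Max_ge) auto
  thus "l - cell_lo S l \<le> max_half_cell S" "cell_hi S l - l \<le> max_half_cell S" by auto
qed

lemma ne_max_half_cell_le_payoff:
  assumes NE: "is_NE n x" and i: "i < n"
  shows "max_half_cell (locations n x) \<le> payoff n x i"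
  unfolding max_half_cell_def
proof (rule Max.boundedI)
  fix a assume "a \<in> (\<lambda>l. max (l - cell_lo (locations n x) l) (cell_hi (locations n x) l - l)) ` locations n x"
  then obtain l where "l \<in> locations n x"
    "a = max (l - cell_lo (locations n x) l) (cell_hi (locations n x) l - l)" by blast
  thus "a \<le> payoff n x i"
    using ne_left_half_cell_le_payoff[OF NE i] ne_right_half_cell_le_payoff[OF NE i] by simp
qed (use i in auto)

lemma ne_occupancy_le_2:
  assumes NE: "is_NE n x" and l: "l \<in> locations n x"
  shows "occupancy n x l \<le> 2"
proof -
  let ?S = "locations n x"
  from l obtain i where i: "i < n" "l = x i" by blast
  have vals: "?S \<subseteq> {0..1}" by (rule ne_locations[OF NE])
  have w: "0 < cell_width ?S l" using cell_width_pos[of ?S l] vals l by auto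
  have m: "0 < real (occupancy n x l)" using occupancy_pos[OF l] by simp
  have "l - cell_lo ?S l \<le> payoff n x i" "cell_hi ?S l - l \<le> payoff n x i"
    using ne_left_half_cell_le_payoff[OF NE i(1) l] ne_right_half_cell_le_payoff[OF NE i(1) l] .
  hence "cell_width ?S l \<le> 2 * payoff n x i" unfolding cell_width_def by linarith
  hence "cell_width ?S l \<le> 2 * (cell_width ?S l / occupancy n x l)"
    using payoff_eq_cell_width[OF vals i(1)] i(2) by simp
  hence "real (occupancy n x l) \<le> 2" using w m by (simp add: field_simps)
  thus ?thesis by simp
qed

lemma ne_occupancy_cases:
  assumes "is_NE n x" "l \<in> locations n x"
  shows "occupancy n x l = 1 \<or> occupancy n x l = 2"
  using ne_occupancy_le_2[OF assms] occupancy_pos[OF assms(2)] by linarith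

lemma ne_half_cells_if_doubled:
  assumes NE: "is_NE n x" and l: "l \<in> locations n x" and two: "occupancy n x l = 2"
  shows "l - cell_lo (locations n x) l = max_half_cell (locations n x)"
    and "cell_hi (locations n x) l - l = max_half_cell (locations n x)"
proof -
  from l obtain i where i: "i < n" "l = x i" by blast
  have "max_half_cell (locations n x) \<le> cell_width (locations n x) l / 2"
    using ne_max_half_cell_le_payoff[OF NE i(1)] payoff_eq_cell_width[OF ne_locations[OF NE] i(1)] two i(2)
    by simp
  thus "l - cell_lo (locations n x) l = max_half_cell (locations n x)"
    "cell_hi (locations n x) l - l = max_half_cell (locations n x)"
    using half_cells_le_max_half_cell[of "locations n x" l] l unfolding cell_width_def by auto
qed

lemma ne_cell_width_if_single:
  assumes NE: "is_NE n x" and l: "l \<in> locations n x" and one: "occupancy n x l = 1"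
  shows "max_half_cell (locations n x) \<le> cell_width (locations n x) l"
proof -
  from l obtain i where i: "i < n" "l = x i" by blast
  thus ?thesis
    using ne_max_half_cell_le_payoff[OF NE i(1)] payoff_eq_cell_width[OF ne_locations[OF NE] i(1)] one
    by simp
qed

text \<open>A lone player at the leftmost location would gain by moving towards its neighbour.\<close>

lemma ne_leftmost_doubled:
  assumes NE: "is_NE n x" and l: "l \<in> locations n x" and leftmost: "\<forall>s\<in>locations n x. l \<le> s"
    and other: "s0 \<in> locations n x" "s0 \<noteq> l"
  shows "occupancy n x l = 2"
proof (rule ccontr)
  let ?S = "locations n x"
  from l obtain i where i: "i < n" "l = x i" by blast
  have vals: "?S \<subseteq> {0..1}" by (rule ne_locations[OF NE])
  assume "occupancy n x l \<noteq> 2"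
  hence one: "occupancy n x (x i) = 1" using ne_occupancy_cases[OF NE l] i(2) by simp
  hence rivals: "rivals n x i = ?S - {l}" using rivals_eq[OF i(1)] i(2) by simp
  obtain r where r: "r \<in> ?S" "l < r" "\<forall>s\<in>?S. l < s \<longrightarrow> r \<le> s" "cell_hi ?S l = (l + r) / 2"
    using finite_imageI[OF finite_lessThan] leftmost other by (cases rule: cell_hi_cases[of ?S l]) force+
  have "cell_lo ?S l = 0" using leftmost by (intro cell_lo_eq_0) auto
  hence pay: "payoff n x i = (l + r) / 2"
    using payoff_alone[OF vals i(1) one] r(4) i(2) unfolding cell_width_def by simp
  define z where "z = (l + r) / 2"
  have z: "l < z" "z < r" "z \<in> {0..1}" using r(1,2) vals l unfolding z_def by force+
  have "\<forall>s\<in>rivals n x i. r \<le> s" using rivals leftmost r(3) by force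
  hence "payoff n (x(i := z)) i = (z + r) / 2"
    using rivals r(1,2) z by (intro payoff_deviate_below[OF vals i(1) z(3)]) auto
  thus False using ne_deviation[OF NE i(1) z(3)] pay z(1) unfolding z_def by simp
qed

lemma ne_rightmost_doubled:
  assumes NE: "is_NE n x" and l: "l \<in> locations n x" and rightmost: "\<forall>s\<in>locations n x. s \<le> l"
    and other: "s0 \<in> locations n x" "s0 \<noteq> l"
  shows "occupancy n x l = 2"
proof -
  have "occupancy n (mirror n x) (1 - l) = 2"
    using l rightmost other
    by (intro ne_leftmost_doubled[OF is_NE_mirror[OF NE], of _ "1 - s0"]) (auto simp: locations_mirror)
  thus ?thesis by (simp add: occupancy_mirror)
qed

lemma ne_social_cost_le:
  assumes NE: "is_NE n x" and n: "0 < n"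
  shows "social_cost n x \<le> max_half_cell (locations n x) / 2"
proof -
  define S where "S = locations n x"
  define H where "H = max_half_cell S"
  have vals: "S \<subseteq> {0..1}" unfolding S_def by (rule ne_locations[OF NE])
  have fin: "finite S" and ne: "S \<noteq> {}" using n unfolding S_def by auto
  have cell: "cell_cost S l \<le> H / 2 * cell_width S l" if l: "l \<in> S" for l
  proof -
    define a where "a = l - cell_lo S l"
    define b where "b = cell_hi S l - l"
    have "0 \<le> a" "a \<le> H" "0 \<le> b" "b \<le> H"
      using cell_lo_bounds[OF fin vals, of l] cell_hi_bounds[OF fin vals, of l]
        half_cells_le_max_half_cell[OF fin l] l vals
      unfolding a_def b_def H_def by auto
    hence "a\<^sup>2 + b\<^sup>2 \<le> H * a + H * b"
      unfolding power2_eq_square by (intro add_mono mult_right_mono)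
    moreover have "cell_cost S l = (a\<^sup>2 + b\<^sup>2) / 2" "cell_width S l = a + b"
      unfolding cell_cost_def cell_width_def a_def b_def by simp_all
    ultimately show ?thesis by (simp add: field_simps)
  qed
  have "social_cost n x = (\<Sum>l\<in>S. cell_cost S l)"
    unfolding S_def by (rule social_cost_eq_sum_cell_cost[OF vals[unfolded S_def] n])
  also have "\<dots> \<le> (\<Sum>l\<in>S. H / 2 * cell_width S l)" using cell by (rule sum_mono)
  also have "\<dots> = H / 2 * (\<Sum>l\<in>S. cell_width S l)" by (rule sum_distrib_left[symmetric])
  also have "\<dots> = H / 2" using sum_cell_width[OF fin ne] by simp
  finally show ?thesis unfolding H_def S_def .
qed

lemma ne_n_times_max_half_cell_le_1:
  assumes NE: "is_NE n x" and n: "0 < n"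
  shows "real n * max_half_cell (locations n x) \<le> 1"
proof -
  have "real n * max_half_cell (locations n x) = (\<Sum>i<n. max_half_cell (locations n x))" by simp
  also have "\<dots> \<le> (\<Sum>i<n. payoff n x i)"
    by (rule sum_mono) (simp add: ne_max_half_cell_le_payoff[OF NE])
  also have "\<dots> = 1" by (rule sum_payoff[OF ne_locations[OF NE] n])
  finally show ?thesis .
qed

text \<open>Scanning the locations from left to right, the slack \<open>Q j\<close> is at least the last right
  half-cell \<open>hr (j - 1)\<close> when \<open>\<Sum>i<j. m i\<close> is odd and at least \<open>H - hr (j - 1)\<close> when it is
  even; at the doubly occupied last location this leaves one extra \<open>H\<close> of slack.\<close>

lemma odd_chain_bound:
  fixes hl hr :: "nat \<Rightarrow> real" and m :: "nat \<Rightarrow> nat"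
  assumes k: "0 < k"
    and m12: "\<And>j. j < k \<Longrightarrow> m j = 1 \<or> m j = 2"
    and m2: "\<And>j. j < k \<Longrightarrow> m j = 2 \<Longrightarrow> hl j = H \<and> hr j = H"
    and m1: "\<And>j. j < k \<Longrightarrow> m j = 1 \<Longrightarrow> H \<le> hl j + hr j"
    and first: "m 0 = 2" and last: "m (k - 1) = 2"
    and step: "\<And>j. Suc j < k \<Longrightarrow> hl (Suc j) = hr j"
    and odd: "odd (\<Sum>j<k. m j)"
  shows "(real (\<Sum>j<k. m j) + 1) * H \<le> (\<Sum>j<k. hl j + hr j)"
proof -
  define Q where "Q j = (\<Sum>i<j. hl i + hr i) - real (\<Sum>i<j. m i) * H" for j
  have inv: "(odd (\<Sum>i<j. m i) \<longrightarrow> hr (j - 1) \<le> Q j) \<and> (even (\<Sum>i<j. m i) \<longrightarrow> H - hr (j - 1) \<le> Q j)"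
    if "1 \<le> j" "j \<le> k" for j
    using that
  proof (induction j)
    case 0
    thus ?case by simp
  next
    case (Suc j)
    show ?case
    proof (cases "j = 0")
      case True
      thus ?thesis using m2[OF k first] first unfolding Q_def by simp
    next
      case False
      have j: "j < k" using Suc.prems by simp
      have IH: "(odd (\<Sum>i<j. m i) \<longrightarrow> hr (j - 1) \<le> Q j) \<and> (even (\<Sum>i<j. m i) \<longrightarrow> H - hr (j - 1) \<le> Q j)"
        using Suc False by simp
      have hl: "hl j = hr (j - 1)" using step[of "j - 1"] False j by simp
      have QSuc: "Q (Suc j) = Q j + hl j + hr j - real (m j) * H" unfolding Q_def by (simp add: algebra_simps)
      consider "m j = 1" | "m j = 2" using m12[OF j] by auto
      thus ?thesis
      proof cases
        case 1
        thus ?thesis using IH QSuc hl m1[OF j 1] by auto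
      next
        case 2
        thus ?thesis using IH QSuc hl m2[OF j 2] by auto
      qed
    qed
  qed
  have "hr (k - 1) \<le> Q k" using inv[of k] k odd by simp
  moreover have "hr (k - 1) = H" using m2[of "k - 1"] last k by simp
  ultimately show ?thesis unfolding Q_def by (simp add: algebra_simps)
qed

lemma ne_card_locations_ge_2:
  assumes NE: "is_NE n x" and n: "3 \<le> n"
  shows "2 \<le> card (locations n x)"
proof (rule ccontr)
  assume "\<not> 2 \<le> card (locations n x)"
  hence "card (locations n x) \<le> Suc 0" by simp
  hence all: "\<forall>a\<in>locations n x. \<forall>b\<in>locations n x. a = b"
    by (simp only: card_le_Suc0_iff_eq[OF finite_imageI[OF finite_lessThan]])
  have "x j = x 0" if "j < n" for j
  proof -
    have "x j \<in> locations n x" "x 0 \<in> locations n x" using that n by simp_all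
    with all show ?thesis by blast
  qed
  hence "{j \<in> {..<n}. x j = x 0} = {..<n}" by blast
  hence "occupancy n x (x 0) = n" unfolding occupancy_def by simp
  thus False using ne_occupancy_le_2[OF NE, of "x 0"] n by simp
qed

lemma ne_card_locations_add_2_le:
  assumes NE: "is_NE n x" and two: "2 \<le> card (locations n x)"
  shows "card (locations n x) + 2 \<le> n"
proof -
  let ?S = "locations n x"
  have fin: "finite ?S" by simp
  have ne: "?S \<noteq> {}" using two by auto
  have ends: "Min ?S \<in> ?S" "Max ?S \<in> ?S" using fin ne by auto
  have distinct: "Min ?S \<noteq> Max ?S" by (rule Min_neq_Max[OF fin two])
  have "occupancy n x (Min ?S) = 2"
    by (rule ne_leftmost_doubled[OF NE ends(1) _ ends(2) not_sym[OF distinct]]) (simp add: fin)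
  moreover have "occupancy n x (Max ?S) = 2"
    by (rule ne_rightmost_doubled[OF NE ends(2) _ ends(1) distinct]) (simp add: fin)
  ultimately have "(\<Sum>l\<in>{Min ?S, Max ?S}. occupancy n x l) = 4" using distinct by simp
  moreover have "card (?S - {Min ?S, Max ?S}) \<le> (\<Sum>l\<in>?S - {Min ?S, Max ?S}. occupancy n x l)"
  proof -
    have "1 \<le> occupancy n x l" if "l \<in> ?S" for l
      using occupancy_pos[of l x n] that by simp
    thus ?thesis unfolding card_eq_sum by (intro sum_mono) simp
  qed
  moreover have "card (?S - {Min ?S, Max ?S}) + 2 = card ?S"
    using fin ends distinct two by (simp add: card_Diff_subset)
  moreover have "(\<Sum>l\<in>?S. occupancy n x l) = n" by (rule sum_occupancy)
  moreover have "(\<Sum>l\<in>?S. occupancy n x l)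
      = (\<Sum>l\<in>?S - {Min ?S, Max ?S}. occupancy n x l) + (\<Sum>l\<in>{Min ?S, Max ?S}. occupancy n x l)"
    using ends fin by (intro sum.subset_diff) simp_all
  ultimately show ?thesis by linarith
qed

lemma ne_Suc_n_times_max_half_cell_le_1:
  assumes NE: "is_NE n x" and n: "3 \<le> n" and odd: "odd n"
  shows "(real n + 1) * max_half_cell (locations n x) \<le> 1"
proof -
  let ?S = "locations n x" and ?H = "max_half_cell (locations n x)"
  define xs where "xs = sorted_list_of_set ?S"
  define k where "k = card ?S"
  have fin: "finite ?S" by simp
  have "x 0 \<in> ?S" using n by simp
  hence ne: "?S \<noteq> {}" by blast
  have k: "2 \<le> k" using ne_card_locations_ge_2[OF NE n] unfolding k_def .
  have mem: "xs ! j \<in> ?S" if "j < k" for j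
    using sorted_list_of_set_nth_in[OF fin] that unfolding xs_def k_def .
  have le_iff: "xs ! i \<le> xs ! j \<longleftrightarrow> i \<le> j" if "i < k" "j < k" for i j
    using sorted_list_of_set_nth_le_iff[OF fin] that unfolding xs_def k_def .
  have ends: "0 < k" "k - 1 < k" using k by simp_all
  have leftmost: "\<forall>s\<in>?S. xs ! 0 \<le> s" and rightmost: "\<forall>s\<in>?S. s \<le> xs ! (k - 1)"
    using sorted_list_of_set_first_le[OF fin] sorted_list_of_set_last_ge[OF fin]
    unfolding xs_def k_def by blast+
  have ends_differ: "xs ! (k - 1) \<noteq> xs ! 0" using le_iff[of "k - 1" 0] k by auto
  define hl where "hl j = xs ! j - cell_lo ?S (xs ! j)" for j
  define hr where "hr j = cell_hi ?S (xs ! j) - xs ! j" for j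
  define m where "m j = occupancy n x (xs ! j)" for j
  have sum_m: "(\<Sum>j<k. m j) = n"
    using sum_occupancy[of n x] sum_sorted_list_of_set[OF fin, of "occupancy n x"]
    unfolding m_def xs_def k_def by simp
  have sum_h: "(\<Sum>j<k. hl j + hr j) = 1"
    using sum_cell_width[OF fin ne] sum_sorted_list_of_set[OF fin, of "cell_width ?S"]
    unfolding hl_def hr_def xs_def k_def cell_width_def by simp
  have "(real (\<Sum>j<k. m j) + 1) * ?H \<le> (\<Sum>j<k. hl j + hr j)"
  proof (rule odd_chain_bound)
    show "m j = 1 \<or> m j = 2" if "j < k" for j
      unfolding m_def by (rule ne_occupancy_cases[OF NE mem[OF that]])
    show "hl j = ?H \<and> hr j = ?H" if "j < k" "m j = 2" for j
      using ne_half_cells_if_doubled[OF NE mem[OF that(1)]] that(2) unfolding m_def hl_def hr_def by simp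
    show "?H \<le> hl j + hr j" if "j < k" "m j = 1" for j
      using ne_cell_width_if_single[OF NE mem[OF that(1)]] that(2)
      unfolding m_def hl_def hr_def cell_width_def by simp
    show "m 0 = 2" unfolding m_def
      by (rule ne_leftmost_doubled[OF NE mem[OF ends(1)] leftmost mem[OF ends(2)] ends_differ])
    show "m (k - 1) = 2" unfolding m_def
      by (rule ne_rightmost_doubled[OF NE mem[OF ends(2)] rightmost mem[OF ends(1)] not_sym[OF ends_differ]])
    show "hl (Suc j) = hr j" if "Suc j < k" for j
      using cell_between_sorted_neighbours[OF fin that[unfolded k_def]] unfolding hl_def hr_def xs_def by simp
  qed (use ends odd sum_m in simp_all)
  thus ?thesis using sum_m sum_h by simp
qed

section \<open>Equilibria on a grid\<close>

definition grid :: "nat \<Rightarrow> nat \<Rightarrow> real" where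
  "grid K a = (2 * real a + 1) / (2 * real K)"

lemma grid_less_iff: "0 < K \<Longrightarrow> grid K a < grid K b \<longleftrightarrow> a < b"
  unfolding grid_def by (simp add: divide_less_cancel)

lemma grid_le_iff: "0 < K \<Longrightarrow> grid K a \<le> grid K b \<longleftrightarrow> a \<le> b"
  unfolding grid_def by (simp add: divide_le_cancel)

lemma grid_eq_iff: "0 < K \<Longrightarrow> grid K a = grid K b \<longleftrightarrow> a = b"
  using grid_le_iff[of K a b] grid_le_iff[of K b a] by auto

lemma grid_Suc: "0 < K \<Longrightarrow> grid K (Suc a) = grid K a + 1 / real K"
  unfolding grid_def by (simp add: field_simps)

lemma grid_in_unit_interval: "a < K \<Longrightarrow> grid K a \<in> {0..1}"
  unfolding grid_def by (auto simp: field_simps)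

lemma cell_lo_grid:
  assumes K: "0 < K" and j: "j < K"
  shows "cell_lo (grid K ` {..<K}) (grid K j) = real j / real K"
proof (cases j)
  case 0
  have "cell_lo (grid K ` {..<K}) (grid K j) = 0"
    using 0 grid_le_iff[OF K] by (intro cell_lo_eq_0) auto
  thus ?thesis using 0 by simp
next
  case (Suc i)
  have "cell_lo (grid K ` {..<K}) (grid K j) = (grid K j + grid K i) / 2"
    using Suc j grid_less_iff[OF K] grid_le_iff[OF K] by (intro cell_lo_eq) auto
  also have "\<dots> = real j / real K" using Suc K unfolding grid_def by (simp add: field_simps)
  finally show ?thesis .
qed

lemma cell_hi_grid:
  assumes K: "0 < K" and j: "j < K"
  shows "cell_hi (grid K ` {..<K}) (grid K j) = (real j + 1) / real K"
proof (cases "Suc j = K")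
  case True
  have "cell_hi (grid K ` {..<K}) (grid K j) = 1"
    using True grid_le_iff[OF K] by (intro cell_hi_eq_1) auto
  thus ?thesis using True by simp
next
  case False
  have "cell_hi (grid K ` {..<K}) (grid K j) = (grid K j + grid K (Suc j)) / 2"
    using False j grid_less_iff[OF K] grid_le_iff[OF K] by (intro cell_hi_eq) (auto simp: Suc_le_eq)
  also have "\<dots> = (real j + 1) / real K" using K unfolding grid_def by (simp add: field_simps)
  finally show ?thesis .
qed

lemma social_cost_grid:
  assumes K: "0 < K" and n: "0 < n" and x: "locations n x = grid K ` {..<K}"
  shows "social_cost n x = 1 / (4 * real K)"
proof -
  have vals: "locations n x \<subseteq> {0..1}" unfolding x using grid_in_unit_interval by auto
  have "social_cost n x = (\<Sum>l\<in>grid K ` {..<K}. cell_cost (grid K ` {..<K}) l)"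
    using social_cost_eq_sum_cell_cost[OF vals n] unfolding x .
  also have "\<dots> = (\<Sum>j<K. cell_cost (grid K ` {..<K}) (grid K j))"
    by (rule sum.reindex_cong[where l = "grid K"]) (auto simp: inj_on_def grid_eq_iff[OF K])
  also have "\<dots> = (\<Sum>j<K. 1 / (4 * real K ^ 2))"
  proof (rule sum.cong)
    fix j assume "j \<in> {..<K}"
    hence "cell_cost (grid K ` {..<K}) (grid K j)
        = ((grid K j - real j / real K)\<^sup>2 + ((real j + 1) / real K - grid K j)\<^sup>2) / 2"
      by (simp add: cell_cost_def cell_lo_grid[OF K] cell_hi_grid[OF K])
    also have "\<dots> = 1 / (4 * real K ^ 2)"
      using K unfolding grid_def by (simp add: field_simps power2_eq_square)
    finally show "cell_cost (grid K ` {..<K}) (grid K j) = 1 / (4 * real K ^ 2)" .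
  qed simp
  also have "\<dots> = 1 / (4 * real K)" using K by (simp add: power2_eq_square)
  finally show ?thesis .
qed

lemma unit_interval_grid_cell:
  fixes K :: nat
  assumes K: "0 < K" and y: "y \<in> {0..1}"
  obtains a where "a < K" "real a \<le> y * real K" "y * real K \<le> real a + 1"
proof -
  define a where "a = min (nat \<lfloor>y * real K\<rfloor>) (K - 1)"
  have "0 \<le> y * real K" "y * real K \<le> real K" using y K by (auto simp: mult_le_cancel_right1)
  hence "real a \<le> y * real K" "y * real K \<le> real a + 1" unfolding a_def using K
    by (auto simp: min_def of_nat_diff not_le) linarith+
  moreover have "a < K" unfolding a_def using K by simp
  ultimately show ?thesis using that by blast
qed

lemma covers_grid:
  assumes K: "0 < K"
  shows "covers (grid K ` {..<K}) (1 / (2 * real K))"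
  unfolding covers_def
proof
  fix y :: real assume "y \<in> {0..1}"
  then obtain a where a: "a < K" "real a \<le> y * real K" "y * real K \<le> real a + 1"
    using unit_interval_grid_cell[OF K] by blast
  have "\<bar>grid K a - y\<bar> \<le> 1 / (2 * real K)"
    using a K unfolding grid_def by (auto simp: abs_le_iff field_simps)
  thus "\<exists>q\<in>grid K ` {..<K}. \<bar>q - y\<bar> \<le> 1 / (2 * real K)" using a(1) by blast
qed

text \<open>Removing one interior grid point, the neighbour on the side of the consumer is
  still within distance \<open>1 / K\<close>.\<close>

lemma covers_grid_remove:
  assumes K: "0 < K" and c: "0 < c" "c < K - 1"
  shows "covers (grid K ` ({..<K} - {c})) (1 / real K)"
  unfolding covers_def
proof
  fix y :: real assume "y \<in> {0..1}"
  then obtain a where a: "a < K" "real a \<le> y * real K" "y * real K \<le> real a + 1"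
    using unit_interval_grid_cell[OF K] by blast
  have near: "\<bar>grid K a - y\<bar> \<le> 1 / (2 * real K)"
    using a K unfolding grid_def by (auto simp: abs_le_iff field_simps)
  have half: "0 \<le> 1 / (2 * real K)" "1 / (2 * real K) \<le> 1 / real K" using K by (simp_all add: frac_le)
  consider "a \<noteq> c" | "a = c" "y \<le> grid K c" | "a = c" "grid K c < y" by fastforce
  then obtain b where "b < K" "b \<noteq> c" "\<bar>grid K b - y\<bar> \<le> 1 / real K"
  proof cases
    case 1
    thus ?thesis using that[of a] a(1) near half by simp
  next
    case 2
    have "grid K c = grid K (c - 1) + 1 / real K" using grid_Suc[OF K, of "c - 1"] c by simp
    thus ?thesis using that[of "c - 1"] 2 near half c K unfolding abs_le_iff by simp
  next
    case 3
    have "grid K (c + 1) = grid K c + 1 / real K" using grid_Suc[OF K, of c] by simp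
    thus ?thesis using that[of "c + 1"] 3 near half c K unfolding abs_le_iff by simp
  qed
  thus "\<exists>q\<in>grid K ` ({..<K} - {c}). \<bar>q - y\<bar> \<le> 1 / real K" by blast
qed

text \<open>The points left by any player cover the segment within that player's payoff.\<close>

lemma is_NE_grid:
  assumes K: "0 < K" and f: "f ` {..<n} = {..<K}"
    and fibres: "\<And>i. i < n \<Longrightarrow> card {j \<in> {..<n}. f j = f i} = 2
      \<or> (card {j \<in> {..<n}. f j = f i} = 1 \<and> 0 < f i \<and> f i < K - 1)"
  shows "is_NE n (\<lambda>i\<in>{..<n}. grid K (f i))"
proof (rule is_NE_if_covers)
  define x where "x = (\<lambda>i\<in>{..<n}. grid K (f i))"
  have xi: "x i = grid K (f i)" if "i < n" for i using that unfolding x_def by simp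
  have locs: "locations n x = grid K ` {..<K}"
    unfolding x_def image_restrict_eq f[symmetric] by (simp add: image_image)
  have vals: "locations n x \<subseteq> {0..1}" unfolding locs using grid_in_unit_interval by auto
  thus "x \<in> profiles n" unfolding profiles_def x_def by auto
  fix i assume i: "i < n"
  have fi: "f i < K" using f i by blast
  have "{j \<in> {..<n}. x j = x i} = {j \<in> {..<n}. f j = f i}" using xi i grid_eq_iff[OF K] by auto
  hence occ: "occupancy n x (x i) = card {j \<in> {..<n}. f j = f i}" unfolding occupancy_def by simp
  have "cell_width (locations n x) (x i) = 1 / real K"
    unfolding locs xi[OF i] cell_width_def cell_lo_grid[OF K fi] cell_hi_grid[OF K fi]
    by (simp add: diff_divide_distrib[symmetric])
  hence pay: "payoff n x i = 1 / real K / occupancy n x (x i)"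
    using payoff_eq_cell_width[OF vals i] by simp
  from fibres[OF i] show "covers (rivals n x i) (payoff n x i)"
  proof
    assume two: "card {j \<in> {..<n}. f j = f i} = 2"
    hence "rivals n x i = grid K ` {..<K}" using rivals_eq[OF i] occ locs by simp
    moreover have "payoff n x i = 1 / (2 * real K)" using pay occ two by simp
    ultimately show ?thesis using covers_grid[OF K] by simp
  next
    assume one: "card {j \<in> {..<n}. f j = f i} = 1 \<and> 0 < f i \<and> f i < K - 1"
    have "rivals n x i = grid K ` {..<K} - {grid K (f i)}"
      using rivals_eq[OF i] occ one locs xi[OF i] by simp
    also have "\<dots> = grid K ` ({..<K} - {f i})" using grid_eq_iff[OF K] by auto
    finally show ?thesis using covers_grid_remove[OF K, of "f i"] pay occ one by simp
  qed
qed

lemma ex_NE_grid: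
  assumes K: "0 < K" and n: "0 < n" and f: "\<And>i. i < n \<Longrightarrow> f i < K"
    and fibres: "\<And>c. c < K \<Longrightarrow> card {j \<in> {..<n}. f j = c} = 2
      \<or> (card {j \<in> {..<n}. f j = c} = 1 \<and> 0 < c \<and> c < K - 1)"
  shows "\<exists>x. is_NE n x \<and> social_cost n x = 1 / (4 * real K)"
proof -
  have "f ` {..<n} = {..<K}"
  proof (intro equalityI subsetI)
    fix c assume "c \<in> {..<K}"
    hence "card {j \<in> {..<n}. f j = c} = 2 \<or> card {j \<in> {..<n}. f j = c} = 1"
      using fibres[of c] by blast
    hence "{j \<in> {..<n}. f j = c} \<noteq> {}" by (metis card.empty zero_neq_numeral zero_neq_one)
    thus "c \<in> f ` {..<n}" by blast
  qed (use f in auto)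
  note surj = this
  show ?thesis
  proof (intro exI conjI)
    show "is_NE n (\<lambda>i\<in>{..<n}. grid K (f i))" using f fibres by (intro is_NE_grid[OF K surj]) simp
    have "locations n (\<lambda>i\<in>{..<n}. grid K (f i)) = grid K ` {..<K}"
      unfolding image_restrict_eq surj[symmetric] by (simp add: image_image)
    thus "social_cost n (\<lambda>i\<in>{..<n}. grid K (f i)) = 1 / (4 * real K)"
      by (rule social_cost_grid[OF K n])
  qed
qed

lemma Inf_social_cost:
  assumes n: "0 < n"
  shows "Inf (social_cost n ` profiles n) = 1 / (4 * real n)"
proof (rule cInf_eq_minimum)
  define x where "x = (\<lambda>i\<in>{..<n}. grid n i)"
  have locs: "locations n x = grid n ` {..<n}" unfolding x_def by simp
  have "x \<in> profiles n" unfolding profiles_def x_def using grid_in_unit_interval by auto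
  moreover have "social_cost n x = 1 / (4 * real n)" by (rule social_cost_grid[OF n n locs])
  ultimately show "1 / (4 * real n) \<in> social_cost n ` profiles n" by (metis image_eqI)
next
  fix c assume "c \<in> social_cost n ` profiles n"
  then obtain x where x: "x \<in> profiles n" "c = social_cost n x" by blast
  have vals: "locations n x \<subseteq> {0..1}" using x(1) unfolding profiles_def by auto
  have "0 < card (locations n x)" "card (locations n x) \<le> n"
    using n card_image_le[of "{..<n}" x] by (auto simp: card_gt_0_iff)
  hence "1 / (4 * real n) \<le> 1 / (4 * real (card (locations n x)))"
    by (intro divide_left_mono) auto
  also have "\<dots> \<le> c" using social_cost_ge[OF vals n] x(2) by simp
  finally show "1 / (4 * real n) \<le> c" .
qed

lemma ex_NE_cost_even:
  assumes n: "2 \<le> n" "even n"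
  shows "\<exists>x. is_NE n x \<and> social_cost n x = 1 / (2 * real n)"
proof -
  define K where "K = n div 2"
  have nK: "n = 2 * K" and K: "0 < K" using n unfolding K_def by auto
  have fibre: "{j \<in> {..<n}. j div 2 = c} = {2 * c, 2 * c + 1}" if "c < K" for c
    using that unfolding nK by (auto; presburger)
  have "\<exists>x. is_NE n x \<and> social_cost n x = 1 / (4 * real K)"
  proof (rule ex_NE_grid[where f = "\<lambda>j. j div 2", OF K])
    show "\<And>i. i < n \<Longrightarrow> i div 2 < K" unfolding nK by simp
    show "\<And>c. c < K \<Longrightarrow> card {j \<in> {..<n}. j div 2 = c} = 2
      \<or> (card {j \<in> {..<n}. j div 2 = c} = 1 \<and> 0 < c \<and> c < K - 1)"
      using fibre by simp
  qed (use n in simp)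
  thus ?thesis unfolding nK by simp
qed

lemma ex_NE_cost_odd:
  assumes n: "5 \<le> n" "odd n"
  shows "\<exists>x. is_NE n x \<and> social_cost n x = 1 / (2 * (real n + 1))"
proof -
  define K where "K = (n + 1) div 2"
  define f where "f j = (if j < 2 then 0 else (j + 1) div 2)" for j :: nat
  have nK: "n + 1 = 2 * K" and K: "3 \<le> K" using n unfolding K_def by auto
  have fibre: "{j \<in> {..<n}. f j = c}
      = (if c = 0 then {0, 1} else if c = 1 then {2} else {2 * c - 1, 2 * c})" if "c < K" for c
    using that nK K unfolding f_def by (auto split: if_splits; presburger)
  have "\<exists>x. is_NE n x \<and> social_cost n x = 1 / (4 * real K)"
  proof (rule ex_NE_grid[where f = f])
    show "\<And>i. i < n \<Longrightarrow> f i < K" using nK unfolding f_def by auto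
    show "\<And>c. c < K \<Longrightarrow> card {j \<in> {..<n}. f j = c} = 2
      \<or> (card {j \<in> {..<n}. f j = c} = 1 \<and> 0 < c \<and> c < K - 1)"
      using fibre K by auto
  qed (use n K in simp_all)
  moreover have "real n + 1 = 2 * real K" using nK by (metis of_nat_1 of_nat_add of_nat_mult of_nat_numeral)
  ultimately show ?thesis by simp
qed

lemma ex_NE_cost_n_minus_2:
  assumes n: "4 \<le> n"
  shows "\<exists>x. is_NE n x \<and> social_cost n x = 1 / (4 * (real n - 2))"
proof -
  define K where "K = n - 2"
  define f where "f j = (if j < 2 then 0 else if j = n - 1 then n - 3 else j - 1)" for j
  have fibre: "{j \<in> {..<n}. f j = c}
      = (if c = 0 then {0, 1} else if c = n - 3 then {n - 2, n - 1} else {c + 1})" if "c < K" for c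
    using that n unfolding f_def K_def by (auto split: if_splits; arith)
  have "\<exists>x. is_NE n x \<and> social_cost n x = 1 / (4 * real K)"
  proof (rule ex_NE_grid[where f = f])
    show "\<And>i. i < n \<Longrightarrow> f i < K" using n unfolding f_def K_def by auto
    show "\<And>c. c < K \<Longrightarrow> card {j \<in> {..<n}. f j = c} = 2
      \<or> (card {j \<in> {..<n}. f j = c} = 1 \<and> 0 < c \<and> c < K - 1)"
      using fibre n unfolding K_def by auto
  qed (use n in \<open>simp_all add: K_def\<close>)
  moreover have "real K = real n - 2" using n unfolding K_def by (simp add: of_nat_diff)
  ultimately show ?thesis by simp
qed

section \<open>Price of anarchy and price of stability\<close>

lemma PoA_eq_if_max_NE_cost:
  assumes n: "0 < n" and bound: "\<And>x. is_NE n x \<Longrightarrow> social_cost n x \<le> c"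
    and attained: "\<exists>x. is_NE n x \<and> social_cost n x = c"
  shows "PoA n = 4 * real n * c"
proof -
  have "Sup (social_cost n ` {x. is_NE n x}) = c"
    using bound attained by (intro cSup_eq_maximum) auto
  thus ?thesis unfolding PoA_def Inf_social_cost[OF n] by simp
qed

lemma PoS_eq_if_min_NE_cost:
  assumes n: "0 < n" and bound: "\<And>x. is_NE n x \<Longrightarrow> c \<le> social_cost n x"
    and attained: "\<exists>x. is_NE n x \<and> social_cost n x = c"
  shows "PoS n = 4 * real n * c"
proof -
  have "Inf (social_cost n ` {x. is_NE n x}) = c"
    using bound attained by (intro cInf_eq_minimum) auto
  thus ?thesis unfolding PoS_def Inf_social_cost[OF n] by simp
qed

lemma PoA_even:
  assumes n: "2 \<le> n" "even n"
  shows "PoA n = 2"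
proof -
  have "social_cost n x \<le> 1 / (2 * real n)" if NE: "is_NE n x" for x
  proof -
    have "social_cost n x \<le> max_half_cell (locations n x) / 2" using ne_social_cost_le[OF NE] n by simp
    also have "\<dots> \<le> 1 / (2 * real n)" using ne_n_times_max_half_cell_le_1[OF NE] n by (simp add: field_simps)
    finally show ?thesis .
  qed
  hence "PoA n = 4 * real n * (1 / (2 * real n))"
    using ex_NE_cost_even[OF n] n by (intro PoA_eq_if_max_NE_cost) simp_all
  thus ?thesis using n by simp
qed

lemma PoA_odd:
  assumes n: "3 < n" "odd n"
  shows "PoA n = 2 * real n / (real n + 1)"
proof -
  have "social_cost n x \<le> 1 / (2 * (real n + 1))" if NE: "is_NE n x" for x
  proof -
    have "social_cost n x \<le> max_half_cell (locations n x) / 2" using ne_social_cost_le[OF NE] n by simp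
    also have "\<dots> \<le> 1 / (2 * (real n + 1))"
      using ne_Suc_n_times_max_half_cell_le_1[OF NE _ n(2)] n by (simp add: field_simps)
    finally show ?thesis .
  qed
  moreover have "5 \<le> n" using n by presburger
  ultimately have "PoA n = 4 * real n * (1 / (2 * (real n + 1)))"
    using ex_NE_cost_odd n by (intro PoA_eq_if_max_NE_cost) simp_all
  thus ?thesis by (simp add: field_simps)
qed

lemma PoS_2: "PoS 2 = 2"
proof -
  have "1 / 4 \<le> social_cost 2 x" if NE: "is_NE 2 x" for x
  proof -
    have "card (locations 2 x) \<noteq> 0" by (simp add: lessThan_empty_iff)
    moreover have "\<not> 2 \<le> card (locations 2 x)" using ne_card_locations_add_2_le[OF NE] by fastforce
    ultimately have "card (locations 2 x) = 1" by linarith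
    thus ?thesis using social_cost_ge[OF ne_locations[OF NE]] by simp
  qed
  hence "PoS 2 = 4 * real 2 * (1 / 4)"
    using ex_NE_cost_even[of 2] by (intro PoS_eq_if_min_NE_cost) simp_all
  thus ?thesis by simp
qed

lemma PoS_ge_4:
  assumes n: "4 \<le> n"
  shows "PoS n = real n / (real n - 2)"
proof -
  have "1 / (4 * (real n - 2)) \<le> social_cost n x" if NE: "is_NE n x" for x
  proof -
    have two: "2 \<le> card (locations n x)" using ne_card_locations_ge_2[OF NE] n by simp
    hence "real (card (locations n x)) \<le> real n - 2" using ne_card_locations_add_2_le[OF NE] by linarith
    hence "1 / (4 * (real n - 2)) \<le> 1 / (4 * real (card (locations n x)))"
      using two by (intro divide_left_mono) auto
    also have "\<dots> \<le> social_cost n x" using social_cost_ge[OF ne_locations[OF NE]] n by simp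
    finally show ?thesis .
  qed
  hence "PoS n = 4 * real n * (1 / (4 * (real n - 2)))"
    using ex_NE_cost_n_minus_2[OF n] n by (intro PoS_eq_if_min_NE_cost) simp_all
  moreover have "real n - 2 \<noteq> 0" using n by simp
  ultimately show ?thesis by (simp add: field_simps)
qed

theorem mainTheorem18:
  shows "(\<forall>n::nat. n \<ge> 2 \<and> even n \<longrightarrow> PoA n = 2)
       \<and> (\<forall>n::nat. n > 3 \<and> odd n \<longrightarrow> PoA n = 2 * real n / (real n + 1))
       \<and> PoS 2 = 2
       \<and> (\<forall>n::nat. n \<ge> 4 \<longrightarrow> PoS n = real n / (real n - 2))"
  using PoA_even PoA_odd PoS_2 PoS_ge_4 by blast

end
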